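(* For every integer $n \geq 2$, $$CB_{n+1}(t)=(n+1)B_n(t)+2(n+1)\sum_{i=1}^{n}(t-1)^i B_{n-i}(t).$$
   Context: For $\pi=[\pi_1,\ldots,\pi_n]\in S_n$ (one-line notation), a pair $(\pi_i,\pi_{i+1})$ with $1\le i\le n-1$ is a (regular) bond if $\pi_i-\pi_{i+1}=\pm1$. The pair $(\pi_n,\pi_1)$ is an edge bond if $\pi_n-\pi_1=\pm1$. A cyclic bond is a regular bond or an edge bond. Let $bnd(\pi)$ be the number of regular bonds and $cbnd(\pi)$ the number of cyclic bonds of $\pi$. Define $B_0(t)=CB_0(t)=1$ and for $n\ge1$: $B_n(t)=\sum_{\pi\in S_n}t^{bnd(\pi)}$ and $CB_n(t)=\sum_{\pi\in S_n}t^{cbnd(\pi)}$. By these definitions, each permutation of $S_2$ has $2$ cyclic bonds, so $CB_2(t)=2t^2$, while $B_1(t)=CB_1(t)=1$, $B_2(t)=2t$. *)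

theory Defs
  imports "HOL-Combinatorics.Permutations" "HOL-Computational_Algebra.Polynomial"
begin

text \<open>A permutation of S_n is a bijection p of {1..n} (p permutes {1..n});
  its one-line notation is [p 1, ..., p n].\<close>

definition is_bond :: "nat \<Rightarrow> nat \<Rightarrow> bool" where
  "is_bond a b \<longleftrightarrow> (int a - int b = 1 \<or> int a - int b = -1)"

definition bnd :: "nat \<Rightarrow> (nat \<Rightarrow> nat) \<Rightarrow> nat" where
  "bnd n p = card {i \<in> {1..<n}. is_bond (p i) (p (i+1))}"

definition cbnd :: "nat \<Rightarrow> (nat \<Rightarrow> nat) \<Rightarrow> nat" where
  "cbnd n p = bnd n p + (if is_bond (p n) (p 1) then 1 else 0)"

definition B :: "nat \<Rightarrow> int poly" where
  "B n = (if n = 0 then 1 else (\<Sum>p \<in> {p. p permutes {1..n}}. [:0, 1:] ^ bnd n p))"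

definition CB :: "nat \<Rightarrow> int poly" where
  "CB n = (if n = 0 then 1 else (\<Sum>p \<in> {p. p permutes {1..n}}. [:0, 1:] ^ cbnd n p))"

end

theory Submission
  imports Defs
begin

(* Rotating the positions cyclically preserves cyclic bonds, so the N classes of S_N given by
   the position of the value N contribute equally, and CB_(n+1) is n+1 times the sum over the
   permutations fixing n+1, i.e. over q in S_n.  The cyclic bonds of such a q are its regular
   bonds, plus (n, n+1) when q n = n, plus the edge bond (n+1, q 1) when q 1 = n; for n >= 2
   these two cases exclude each other.  Let E_n be the generating polynomial of the q in S_n
   with q n = n; by reversing positions it is also that of the q with q 1 = n.  Hence
   CB_(n+1) = (n+1) (B_n + 2 (t - 1) E_n).  The same extension argument gives
   E_(m+1) = B_m + (t - 1) E_m, which unrolls to (t - 1) E_n = sum_(i=1..n) (t - 1)^i B_(n-i). *)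

lemma card_filter_insert:
  assumes "finite A" "a \<notin> A"
  shows "card {i \<in> insert a A. P i} = card {i \<in> A. P i} + (if P a then 1 else 0)"
proof -
  have "{i \<in> insert a A. P i} = (if P a then insert a {i \<in> A. P i} else {i \<in> A. P i})"
    by auto
  then show ?thesis
    using assms by simp
qed

lemma card_filter_bij_betw:
  assumes "bij_betw \<sigma> S S"
  shows "card {i \<in> S. P (\<sigma> i)} = card {i \<in> S. P i}"
proof -
  have "bij_betw \<sigma> {i \<in> S. P (\<sigma> i)} {i \<in> S. P i}"
    unfolding bij_betw_def
  proof
    show "inj_on \<sigma> {i \<in> S. P (\<sigma> i)}"
      using bij_betw_imp_inj_on[OF assms] by (rule inj_on_subset) blast
    show "\<sigma> ` {i \<in> S. P (\<sigma> i)} = {i \<in> S. P i}"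
      using bij_betw_imp_surj_on[OF assms] by (auto simp: image_iff)
  qed
  then show ?thesis
    by (rule bij_betw_same_card)
qed

lemma permutes_insert_fixed:
  assumes "a \<notin> S"
  shows "{p. p permutes insert a S \<and> p a = a} = {p. p permutes S}"
proof (intro set_eqI iffI; clarsimp)
  fix p assume "p permutes insert a S" "p a = a"
  then show "p permutes S" by (auto intro: permutes_superset)
next
  fix p assume "p permutes S"
  then show "p permutes insert a S \<and> p a = a"
    using assms by (auto intro: permutes_subset permutes_not_in)
qed

lemma permutes_Suc_fixed:
  "{p. p permutes {1..Suc n} \<and> p (Suc n) = Suc n} = {p. p permutes {1..n}}"
  using permutes_insert_fixed[of "Suc n" "{1..n}"] by (simp add: atLeastAtMostSuc_conv)

lemma sum_permutes_filter:
  assumes "finite S"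
  shows "(\<Sum>p | p permutes S \<and> P p. f p) = (\<Sum>p | p permutes S. if P p then f p else 0)"
  using sum.inter_filter[OF finite_permutations[OF assms], of f P] by simp

lemma sum_permutes_filter_compose_right:
  assumes "finite S" "\<sigma> permutes S"
  shows "(\<Sum>p | p permutes S \<and> P p. f p)
    = (\<Sum>p | p permutes S \<and> P (p \<circ> \<sigma>). f (p \<circ> \<sigma>))"
  unfolding sum_permutes_filter[OF assms(1)] by (rule sum_permutations_compose_right[OF assms(2)])

lemma sum_permutes_if_mult:
  fixes c :: "'a::semiring_0"
  assumes "finite S"
  shows "(\<Sum>p | p permutes S. if P p then c * f p else 0) = c * (\<Sum>p | p permutes S \<and> P p. f p)"
  unfolding sum_permutes_filter[OF assms] sum_distrib_left by (rule sum.cong) simp_all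

lemma power_add_indicator:
  fixes x :: "'a::comm_ring_1"
  shows "x ^ (k + (if P then 1 else 0)) = x ^ k + (if P then (x - 1) * x ^ k else 0)"
  by (simp add: algebra_simps)

lemma power_add_two_indicators:
  fixes x :: "'a::comm_ring_1"
  assumes "\<not> (P \<and> Q)"
  shows "x ^ (k + (if P then 1 else 0) + (if Q then 1 else 0))
    = x ^ k + (if P then (x - 1) * x ^ k else 0) + (if Q then (x - 1) * x ^ k else 0)"
  using assms by (cases P; cases Q) (simp_all add: algebra_simps)

definition cyclic_shift :: "nat \<Rightarrow> nat \<Rightarrow> nat" where
  "cyclic_shift N i = (if i \<in> {1..N} then i mod N + 1 else i)"

lemma cyclic_shift_less: "1 \<le> i \<Longrightarrow> i < N \<Longrightarrow> cyclic_shift N i = i + 1"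
  by (auto simp: cyclic_shift_def)

lemma cyclic_shift_last: "1 \<le> N \<Longrightarrow> cyclic_shift N N = 1"
  by (auto simp: cyclic_shift_def)

lemma cyclic_shift_in: "i \<in> {1..N} \<Longrightarrow> cyclic_shift N i \<in> {1..N}"
  by (cases "i = N") (auto simp: cyclic_shift_less cyclic_shift_last)

lemma bij_betw_cyclic_shift: "bij_betw (cyclic_shift N) {1..N} {1..N}"
proof (rule bij_betw_byWitness[where f' = "\<lambda>i. if i = 1 then N else i - 1"])
  show "\<forall>i\<in>{1..N}. (if cyclic_shift N i = 1 then N else cyclic_shift N i - 1) = i"
  proof
    fix i assume "i \<in> {1..N}"
    then consider "i = N" "1 \<le> N" | "1 \<le> i" "i < N" by fastforce
    then show "(if cyclic_shift N i = 1 then N else cyclic_shift N i - 1) = i"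
      by cases (auto simp: cyclic_shift_less cyclic_shift_last)
  qed
  show "\<forall>i\<in>{1..N}. cyclic_shift N (if i = 1 then N else i - 1) = i"
    by (auto simp: cyclic_shift_less cyclic_shift_last)
  show "cyclic_shift N ` {1..N} \<subseteq> {1..N}"
    using cyclic_shift_in by blast
qed auto

lemma cyclic_shift_permutes: "cyclic_shift N permutes {1..N}"
  by (rule bij_imp_permutes[OF bij_betw_cyclic_shift]) (auto simp: cyclic_shift_def)

definition mirror :: "nat \<Rightarrow> nat \<Rightarrow> nat" where
  "mirror n i = (if i \<in> {1..n} then n + 1 - i else i)"

lemma mirror_permutes: "mirror n permutes {1..n}"
proof (rule bij_imp_permutes)
  show "bij_betw (mirror n) {1..n} {1..n}"
    by (rule bij_betw_byWitness[where f' = "mirror n"]) (auto simp: mirror_def)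
qed (auto simp: mirror_def)

lemma is_bond_commute: "is_bond a b \<longleftrightarrow> is_bond b a"
  unfolding is_bond_def by auto

lemma bnd_Suc:
  assumes q: "q permutes {1..n}" and "1 \<le> n"
  shows "bnd (Suc n) q = bnd n q + (if q n = n then 1 else 0)"
proof -
  let ?bond = "\<lambda>i. is_bond (q i) (q (i + 1))"
  have "q n \<in> {1..n}" "q (Suc n) = Suc n"
    using assms permutes_in_image[OF q] permutes_not_in[OF q] by auto
  then have last_bond: "?bond n \<longleftrightarrow> q n = n"
    unfolding is_bond_def by auto
  have "{1..<Suc n} = insert n {1..<n}"
    using assms(2) by auto
  then have "bnd (Suc n) q = card {i \<in> {1..<n}. ?bond i} + (if ?bond n then 1 else 0)"
    unfolding bnd_def by (simp only:) (rule card_filter_insert; simp)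
  then show ?thesis
    unfolding bnd_def last_bond .
qed

lemma cbnd_eq_card_cyclic_shift:
  assumes "1 \<le> N"
  shows "cbnd N p = card {i \<in> {1..N}. is_bond (p i) (p (cyclic_shift N i))}"
proof -
  let ?bond = "\<lambda>i. is_bond (p i) (p (cyclic_shift N i))"
  have "{1..N} = insert N {1..<N}"
    using assms by auto
  then have "card {i \<in> {1..N}. ?bond i} = card {i \<in> {1..<N}. ?bond i} + (if ?bond N then 1 else 0)"
    by (simp only:) (rule card_filter_insert; simp)
  moreover have "{i \<in> {1..<N}. ?bond i} = {i \<in> {1..<N}. is_bond (p i) (p (i + 1))}"
    by (auto simp: cyclic_shift_less)
  ultimately show ?thesis
    unfolding cbnd_def bnd_def using assms by (simp add: cyclic_shift_last)
qed

lemma cbnd_compose_cyclic_shift: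
  assumes "1 \<le> N"
  shows "cbnd N (p \<circ> cyclic_shift N) = cbnd N p"
  using cbnd_eq_card_cyclic_shift[OF assms, of p]
    cbnd_eq_card_cyclic_shift[OF assms, of "p \<circ> cyclic_shift N"]
    card_filter_bij_betw[OF bij_betw_cyclic_shift, of N "\<lambda>j. is_bond (p j) (p (cyclic_shift N j))"]
  by simp

lemma bnd_compose_mirror: "bnd n (q \<circ> mirror n) = bnd n q"
proof -
  let ?bond = "\<lambda>j. is_bond (q j) (q (j + 1))"
  have bij: "bij_betw (\<lambda>i. n - i) {1..<n} {1..<n}"
    by (rule bij_betw_byWitness[where f' = "\<lambda>i. n - i"]) auto
  have reversed: "{i \<in> {1..<n}. is_bond ((q \<circ> mirror n) i) ((q \<circ> mirror n) (i + 1))}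
      = {i \<in> {1..<n}. ?bond (n - i)}"
    by (auto simp: mirror_def is_bond_commute Suc_diff_le)
  show ?thesis
    unfolding bnd_def reversed by (rule card_filter_bij_betw[OF bij, of ?bond])
qed

lemma sum_permutes_cyclic_shift_invariant:
  fixes f :: "(nat \<Rightarrow> nat) \<Rightarrow> 'a::semiring_1"
  assumes "1 \<le> N" and invariant: "\<And>p. p permutes {1..N} \<Longrightarrow> f (p \<circ> cyclic_shift N) = f p"
  shows "(\<Sum>p | p permutes {1..N}. f p)
    = of_nat N * (\<Sum>p | p permutes {1..N} \<and> p N = N. f p)"
proof -
  define G where "G k = (\<Sum>p | p permutes {1..N} \<and> p k = N. f p)" for k
  have G_cyclic_shift: "G k = G (cyclic_shift N k)" for k
  proof -
    have "G k = (\<Sum>p | p permutes {1..N} \<and> (p \<circ> cyclic_shift N) k = N.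
        f (p \<circ> cyclic_shift N))"
      unfolding G_def
      by (rule sum_permutes_filter_compose_right[OF finite_atLeastAtMost cyclic_shift_permutes])
    also have "\<dots> = G (cyclic_shift N k)"
      unfolding G_def by (rule sum.cong) (auto simp: invariant)
    finally show ?thesis .
  qed
  have G_const: "G k = G N" if "k \<le> N" "1 \<le> k" for k
    using that
  proof (induction k rule: inc_induct)
    case (step k)
    then show ?case
      using G_cyclic_shift[of k] by (simp add: cyclic_shift_less)
  qed simp
  have "(\<lambda>p. inv p N) ` {p. p permutes {1..N}} \<subseteq> {1..N}"
  proof (rule image_subsetI)
    fix p assume "p \<in> {p. p permutes {1..N}}"
    then have "inv p permutes {1..N}"
      by (simp add: permutes_inv)
    then have "inv p N \<in> {1..N} \<longleftrightarrow> N \<in> {1..N}"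
      by (rule permutes_in_image)
    then show "inv p N \<in> {1..N}"
      using assms(1) by simp
  qed
  then have "(\<Sum>p | p permutes {1..N}. f p)
      = (\<Sum>k\<in>{1..N}. \<Sum>p | p permutes {1..N} \<and> inv p N = k. f p)"
    using sum.group[of "{p. p permutes {1..N}}" "{1..N}" "\<lambda>p. inv p N" f]
    by (simp add: finite_permutations)
  also have "\<dots> = (\<Sum>k\<in>{1..N}. G k)"
  proof (rule sum.cong)
    fix k assume "k \<in> {1..N}"
    have "{p. p permutes {1..N} \<and> inv p N = k} = {p. p permutes {1..N} \<and> p k = N}"
      by (intro Collect_cong conj_cong refl) (rule permutes_inv_eq)
    then show "(\<Sum>p | p permutes {1..N} \<and> inv p N = k. f p) = G k"
      unfolding G_def by simp
  qed simp
  also have "\<dots> = (\<Sum>k\<in>{1..N}. G N)"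
    by (rule sum.cong[OF refl]) (rule G_const; simp)
  also have "\<dots> = of_nat N * G N"
    by simp
  finally show ?thesis
    unfolding G_def .
qed

abbreviation t :: "int poly" where "t \<equiv> [:0, 1:]"

lemma pCons_minus_one_eq: "[:-1, 1:] = t - 1"
  by (simp add: one_pCons)

lemma CB_eq_of_nat_mult_fixing_last:
  assumes "1 \<le> N"
  shows "CB N = of_nat N * (\<Sum>p | p permutes {1..N} \<and> p N = N. t ^ cbnd N p)"
  using assms sum_permutes_cyclic_shift_invariant[OF assms, of "\<lambda>p. t ^ cbnd N p"]
  unfolding CB_def by (simp add: cbnd_compose_cyclic_shift)

definition B_fixing_last :: "nat \<Rightarrow> int poly" where
  "B_fixing_last n = (\<Sum>q | q permutes {1..n} \<and> q n = n. t ^ bnd n q)"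

lemma B_eq_sum: "1 \<le> n \<Longrightarrow> B n = (\<Sum>q | q permutes {1..n}. t ^ bnd n q)"
  by (simp add: B_def)

lemma B_fixing_last_Suc:
  assumes "1 \<le> m"
  shows "B_fixing_last (Suc m) = B m + (t - 1) * B_fixing_last m"
proof -
  have "B_fixing_last (Suc m) = (\<Sum>q | q permutes {1..m}. t ^ bnd (Suc m) q)"
    unfolding B_fixing_last_def permutes_Suc_fixed ..
  also have "\<dots> = (\<Sum>q | q permutes {1..m}.
      t ^ bnd m q + (if q m = m then (t - 1) * t ^ bnd m q else 0))"
    using assms by (intro sum.cong refl) (simp add: bnd_Suc power_add_indicator)
  also have "\<dots> = B m + (t - 1) * B_fixing_last m"
    using assms unfolding B_fixing_last_def by (simp add: B_eq_sum sum.distrib sum_permutes_if_mult)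
  finally show ?thesis .
qed

lemma B_fixing_last_one: "B_fixing_last 1 = 1"
  using permutes_Suc_fixed[of 0] by (simp add: B_fixing_last_def bnd_def)

lemma B_fixing_last_closed_form:
  assumes "1 \<le> n"
  shows "(t - 1) * B_fixing_last n = (\<Sum>i = 1..n. (t - 1) ^ i * B (n - i))"
  using assms
proof (induction n rule: nat_induct_at_least)
  case base
  then show ?case
    using B_fixing_last_one by (simp add: B_def)
next
  case (Suc n)
  have "(t - 1) * B_fixing_last (Suc n)
      = (t - 1) * B n + (t - 1) * ((t - 1) * B_fixing_last n)"
    unfolding B_fixing_last_Suc[OF Suc.hyps] by (rule distrib_left)
  also have "\<dots> = (t - 1) * B n + (\<Sum>i = 1..n. (t - 1) ^ Suc i * B (Suc n - Suc i))"
    by (simp add: Suc.IH sum_distrib_left mult.assoc)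
  also have "\<dots> = (\<Sum>i = 1..Suc n. (t - 1) ^ i * B (Suc n - i))"
    by (simp only: sum.atLeast_Suc_atMost[of 1 "Suc n"] sum.atLeast_Suc_atMost_Suc_shift) simp_all
  finally show ?case .
qed

lemma sum_bnd_first_to_last:
  assumes "1 \<le> n"
  shows "(\<Sum>q | q permutes {1..n} \<and> q 1 = n. t ^ bnd n q) = B_fixing_last n"
proof -
  have "mirror n 1 = n"
    using assms by (simp add: mirror_def)
  then show ?thesis
    unfolding B_fixing_last_def
    by (subst sum_permutes_filter_compose_right[OF finite_atLeastAtMost mirror_permutes])
       (simp add: bnd_compose_mirror)
qed

lemma cbnd_Suc_fixed:
  assumes q: "q permutes {1..n}" and "2 \<le> n"
  shows "cbnd (Suc n) q = bnd n q + (if q n = n then 1 else 0) + (if q 1 = n then 1 else 0)"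
proof -
  have "q 1 \<in> {1..n}" "q (Suc n) = Suc n"
    using assms permutes_in_image[OF q] permutes_not_in[OF q] by auto
  then have "is_bond (q (Suc n)) (q 1) \<longleftrightarrow> q 1 = n"
    unfolding is_bond_def by auto
  then show ?thesis
    unfolding cbnd_def using bnd_Suc[OF q] assms(2) by simp
qed

lemma sum_cbnd_Suc_permutes:
  assumes "2 \<le> n"
  shows "(\<Sum>q | q permutes {1..n}. t ^ cbnd (Suc n) q) = B n + 2 * (t - 1) * B_fixing_last n"
proof -
  have split: "t ^ cbnd (Suc n) q = t ^ bnd n q + (if q n = n then (t - 1) * t ^ bnd n q else 0)
      + (if q 1 = n then (t - 1) * t ^ bnd n q else 0)" if q: "q permutes {1..n}" for q
  proof -
    have "q n \<noteq> q 1"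
      using permutes_inj[OF q] assms by (simp add: inj_eq)
    then have "\<not> (q n = n \<and> q 1 = n)"
      by auto
    then show ?thesis
      unfolding cbnd_Suc_fixed[OF q assms] by (rule power_add_two_indicators)
  qed
  have "(\<Sum>q | q permutes {1..n}. t ^ cbnd (Suc n) q)
      = (\<Sum>q | q permutes {1..n}. t ^ bnd n q + (if q n = n then (t - 1) * t ^ bnd n q else 0)
          + (if q 1 = n then (t - 1) * t ^ bnd n q else 0))"
    by (rule sum.cong) (simp_all add: split)
  also have "\<dots> = B n + (t - 1) * B_fixing_last n
      + (t - 1) * (\<Sum>q | q permutes {1..n} \<and> q 1 = n. t ^ bnd n q)"
    unfolding sum.distrib sum_permutes_if_mult[OF finite_atLeastAtMost] B_fixing_last_def
    using assms by (simp add: B_eq_sum)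
  also have "\<dots> = B n + 2 * (t - 1) * B_fixing_last n"
    unfolding sum_bnd_first_to_last[OF order.trans[OF one_le_numeral assms]]
    by (simp only: mult_2 distrib_right add.assoc)
  finally show ?thesis .
qed

lemma CB_Suc:
  assumes "2 \<le> n"
  shows "CB (Suc n) = of_nat (Suc n) * (B n + 2 * (t - 1) * B_fixing_last n)"
proof -
  have "CB (Suc n) = of_nat (Suc n)
      * (\<Sum>p | p permutes {1..Suc n} \<and> p (Suc n) = Suc n. t ^ cbnd (Suc n) p)"
    by (rule CB_eq_of_nat_mult_fixing_last) simp
  then show ?thesis
    unfolding permutes_Suc_fixed sum_cbnd_Suc_permutes[OF assms] .
qed

theorem theorem2p1:
  fixes n :: nat
  assumes "n \<ge> 2"
  shows "CB (n + 1) = of_nat (n + 1) * B n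
           + 2 * of_nat (n + 1) * (\<Sum>i = 1..n. [:-1, 1:] ^ i * B (n - i))"
proof -
  have "(\<Sum>i = 1..n. [:-1, 1:] ^ i * B (n - i)) = (t - 1) * B_fixing_last n"
    unfolding pCons_minus_one_eq using B_fixing_last_closed_form assms by simp
  moreover have "CB (n + 1) = of_nat (n + 1) * (B n + 2 * (t - 1) * B_fixing_last n)"
    using CB_Suc[OF assms] by simp
  ultimately show ?thesis
    by (simp only: distrib_left mult.assoc mult.left_commute)
qed

end
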